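(* (Explicit solutions of the Lotka–Volterra lattice.) Let $M,N\ge1$. Let $\tilde P$ be an invertible $N\times N$ complex matrix, $\tilde R$ an $N\times N$ complex matrix, $U$ an $M\times 1$ and $V$ an $N\times1$ complex vector, and put $Q=VU^T$ ($N\times M$). Let $A,B$ be $N\times N$ and $C,D$ be $M\times N$ complex matrices satisfying $$QC+\tilde RA=-A\tilde P^{-1},\qquad QD+\tilde RB=-B\tilde P .$$ For $n\in\mathbb{Z}$ and $t$ in an interval, define $$\tilde X_n(t)=A+B\tilde P^{\,n}e^{t(\tilde P^{-1}-\tilde P)},\qquad Y_n(t)=C+D\tilde P^{\,n}e^{t(\tilde P^{-1}-\tilde P)},$$ and assume $\tilde X_n(t)$ is invertible for all $n$ and $t$. Set $\varphi_n=U^T Y_n\tilde X_n^{-1}V$ and $a_n=\varphi_{n+1}-\varphi_n-1$. Then $a_n$ solves the Lotka–Volterra lattice equation $$\frac{d a_n}{dt}=a_{n+1}a_n-a_n a_{n-1}\qquad (n\in\mathbb{Z}).$$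
   Context: $U^T$ denotes the transpose of $U$; $\tilde P^{\,n}$ is the $n$-th power of $\tilde P$ (negative powers via $\tilde P^{-1}$), and $e^{(\cdot)}$ is the matrix exponential. Note that $\tilde P^{\,n}$ and $e^{t(\tilde P^{-1}-\tilde P)}$ commute. *)

theory Defs
  imports "HOL-Analysis.Analysis"
begin

text \<open>Matrices are Cartesian-space matrices: a matrix with m rows and n columns over
  complex numbers has type complex^'n^'m; matrix product is (**).\<close>

primrec mat_pow :: "('a::semiring_1)^'n^'n \<Rightarrow> nat \<Rightarrow> 'a^'n^'n" where
  "mat_pow A 0 = mat 1"
| "mat_pow A (Suc k) = A ** mat_pow A k"

definition mat_ipow :: "('a::semiring_1)^'n^'n \<Rightarrow> int \<Rightarrow> 'a^'n^'n" where
  "mat_ipow A n = (if 0 \<le> n then mat_pow A (nat n) else mat_pow (matrix_inv A) (nat (- n)))"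

definition mat_exp :: "complex^'n^'n \<Rightarrow> complex^'n^'n" where
  "mat_exp A = (\<Sum>k. (1 / fact k) *\<^sub>R mat_pow A k)"

definition lv_E :: "complex^'n^'n \<Rightarrow> int \<Rightarrow> real \<Rightarrow> complex^'n^'n" where
  "lv_E P n t = mat_ipow P n ** mat_exp (t *\<^sub>R (matrix_inv P - P))"

definition lv_X :: "complex^'n^'n \<Rightarrow> complex^'n^'n \<Rightarrow> complex^'n^'n \<Rightarrow> int \<Rightarrow> real \<Rightarrow> complex^'n^'n" where
  "lv_X A B P n t = A + B ** lv_E P n t"

definition lv_Y :: "complex^'n^'m \<Rightarrow> complex^'n^'m \<Rightarrow> complex^'n^'n \<Rightarrow> int \<Rightarrow> real \<Rightarrow> complex^'n^'m" where
  "lv_Y C D P n t = C + D ** lv_E P n t"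

definition lv_phi :: "complex^'n^'n \<Rightarrow> complex^'n^'n \<Rightarrow> complex^'n^'m \<Rightarrow> complex^'n^'m \<Rightarrow>
    complex^'n^'n \<Rightarrow> complex^'m \<Rightarrow> complex^'n \<Rightarrow> int \<Rightarrow> real \<Rightarrow> complex" where
  "lv_phi A B C D P U V n t =
     (\<Sum>i\<in>UNIV. (U v* (lv_Y C D P n t ** matrix_inv (lv_X A B P n t))) $ i * V $ i)"

definition lv_a :: "complex^'n^'n \<Rightarrow> complex^'n^'n \<Rightarrow> complex^'n^'m \<Rightarrow> complex^'n^'m \<Rightarrow>
    complex^'n^'n \<Rightarrow> complex^'m \<Rightarrow> complex^'n \<Rightarrow> int \<Rightarrow> real \<Rightarrow> complex" where
  "lv_a A B C D P U V n t = lv_phi A B C D P U V (n + 1) t - lv_phi A B C D P U V n t - 1"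

end

theory Submission
  imports Defs
begin

text \<open>
  Put $E_n(t) = \tilde P^n e^{t(\tilde P^{-1} - \tilde P)}$ and $S(E) = (C + DE)(A + BE)^{-1}$, so that
  $\varphi_n = U^T S(E_n) V$.  Two facts drive the proof.

  Algebra: since $E_{n \pm 1} = \tilde P^{\pm 1} E_n$ and $E_n$ commutes with $\tilde P$, the
  constraints $QC + \tilde RA = -A\tilde P^{-1}$, $QD + \tilde RB = -B\tilde P$ yield the three-term
  identity (lin_frac_three_term)
  $(S_{n+1} - S_n)\,Q\,(S_n - S_{n-1}) = (S_{n+1} - S_{n-1}) + (D - S_n B)(\tilde P^{-1} - \tilde P)E_n X_n^{-1}$.

  Analysis: $E_n' = (\tilde P^{-1} - \tilde P) E_n$, and differentiating the inverse shows that the last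
  summand is exactly $S_n'$ (has_vector_derivative_lin_frac).

  Sandwiching with $U^T \cdot V$, which factorizes through the rank-one matrix $Q = VU^T$, gives
  $\varphi_n' = (\varphi_{n+1} - \varphi_n)(\varphi_n - \varphi_{n-1}) - (\varphi_{n+1} - \varphi_{n-1})$;
  taking the difference of this equation at $n+1$ and $n$ is the Lotka--Volterra equation for $a_n$.
\<close>

section \<open>Matrix algebra\<close>

text \<open>The library provides left distributivity of the matrix product over addition only;
  we add the remaining ring laws so that matrix expressions can be normalized.\<close>

lemma matrix_add_rdistrib: "((A::'a::semiring_1^'n^'m) + B) ** C = A ** C + B ** C"
  by (vector matrix_matrix_mult_def sum.distrib[symmetric] field_simps)

lemma matrix_diff_ldistrib: "(A::'a::ring_1^'n^'m) ** (B - C) = A ** B - A ** C"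
  by (vector matrix_matrix_mult_def sum_subtractf[symmetric] field_simps)

lemma matrix_diff_rdistrib: "((A::'a::ring_1^'n^'m) - B) ** C = A ** C - B ** C"
  by (vector matrix_matrix_mult_def sum_subtractf[symmetric] field_simps)

lemma matrix_neg_left: "(- (A::'a::ring_1^'n^'m)) ** B = - (A ** B)"
  by (vector matrix_matrix_mult_def sum_negf[symmetric])

lemma matrix_neg_right: "(A::'a::ring_1^'n^'m) ** (- B) = - (A ** B)"
  by (vector matrix_matrix_mult_def sum_negf[symmetric])

lemmas matrix_ring_simps = matrix_add_ldistrib matrix_add_rdistrib matrix_diff_ldistrib
  matrix_diff_rdistrib matrix_neg_left matrix_neg_right matrix_mul_assoc

text \<open>The library's matrix inverse is defined by choice; for an invertible matrix it is a
  two-sided inverse.\<close>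

lemma
  fixes X :: "'a::semiring_1^'n^'m"
  assumes "invertible X"
  shows matrix_inv_right: "X ** matrix_inv X = mat 1"
    and matrix_inv_left: "matrix_inv X ** X = mat 1"
  using someI_ex[OF assms[unfolded invertible_def]] unfolding matrix_inv_def by auto

lemma matrix_inv_diff:
  fixes X Y :: "'a::ring_1^'n^'n"
  assumes "invertible X" "invertible Y"
  shows "matrix_inv Y - matrix_inv X = matrix_inv Y ** (X - Y) ** matrix_inv X"
  using assms by (simp add: matrix_ring_simps matrix_inv_right matrix_inv_left
      flip: matrix_mul_assoc)

section \<open>Linear fractional transformations of matrices\<close>

text \<open>The map $E \mapsto (C + DE)(A + BE)^{-1}$.  The solution $\varphi_n$ is $U^T S V$ where $S$ is
  this map evaluated at $E = \tilde P^n e^{t(\tilde P^{-1} - \tilde P)}$.\<close>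

definition lin_frac :: "'a::semiring_1^'n^'n \<Rightarrow> 'a^'n^'n \<Rightarrow> 'a^'n^'m \<Rightarrow> 'a^'n^'m \<Rightarrow>
    'a^'n^'n \<Rightarrow> 'a^'n^'m" where
  "lin_frac A B C D E = (C + D ** E) ** matrix_inv (A + B ** E)"

lemma lin_frac_diff:
  fixes A B E E' :: "'a::ring_1^'n^'n" and C D :: "'a^'n^'m"
  assumes inv: "invertible (A + B ** E)" "invertible (A + B ** E')"
  shows "lin_frac A B C D E' - lin_frac A B C D E
    = (D - lin_frac A B C D E ** B) ** (E' - E) ** matrix_inv (A + B ** E')"
proof -
  let ?S = "lin_frac A B C D E"
  have SA: "?S ** A = C + D ** E - ?S ** B ** E"
  proof -
    have "?S ** (A + B ** E) = C + D ** E"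
      using inv(1) by (simp add: lin_frac_def matrix_inv_left flip: matrix_mul_assoc)
    then show ?thesis by (simp add: matrix_ring_simps algebra_simps)
  qed
  have "(C + D ** E') - ?S ** (A + B ** E') = (D - ?S ** B) ** (E' - E)"
    by (simp add: matrix_ring_simps SA algebra_simps)
  then have "((C + D ** E') - ?S ** (A + B ** E')) ** matrix_inv (A + B ** E')
      = (D - ?S ** B) ** (E' - E) ** matrix_inv (A + B ** E')"
    by simp
  then show ?thesis
    using inv(2) by (simp add: lin_frac_def matrix_diff_rdistrib matrix_inv_right flip: matrix_mul_assoc)
qed

text \<open>The constraints $QC + RA = -AP^{-1}$ and $QD + RB = -BP$ turn $Q$ sandwiched between an inverse
  and a factor $D - S(E_0)B$ into an expression free of $Q$ and $R$, provided $E_2 P^{-1} = P E_0$.\<close>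

lemma lin_frac_sylvester:
  fixes P Pinv R A B E0 E2 :: "'a::ring_1^'n^'n" and C D :: "'a^'n^'m" and Q :: "'a^'m^'n"
  assumes hC: "Q ** C + R ** A = - (A ** Pinv)" and hD: "Q ** D + R ** B = - (B ** P)"
    and shift: "E2 ** Pinv = P ** E0"
    and inv: "invertible (A + B ** E0)" "invertible (A + B ** E2)"
  shows "matrix_inv (A + B ** E2) ** Q ** (D - lin_frac A B C D E0 ** B)
    = Pinv ** matrix_inv (A + B ** E0) ** B - matrix_inv (A + B ** E2) ** B ** P"
proof -
  let ?W0 = "matrix_inv (A + B ** E0)" and ?W2 = "matrix_inv (A + B ** E2)"
  have QC: "Q ** C = - (A ** Pinv) - R ** A" and QD: "Q ** D = - (B ** P) - R ** B"
    using hC hD by (simp_all add: algebra_simps flip: add_eq_0_iff2)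
  have "Q ** (C + D ** E0) = Q ** C + Q ** D ** E0"
    by (simp add: matrix_ring_simps)
  also have "\<dots> = - ((A + B ** E2) ** Pinv) - R ** (A + B ** E0)"
    unfolding QC QD by (simp add: matrix_ring_simps algebra_simps flip: matrix_mul_assoc shift)
  finally have "Q ** lin_frac A B C D E0 = (- ((A + B ** E2) ** Pinv) - R ** (A + B ** E0)) ** ?W0"
    by (simp add: lin_frac_def matrix_mul_assoc)
  also have "\<dots> = - ((A + B ** E2) ** Pinv ** ?W0) - R"
    using inv(1) by (simp add: matrix_diff_rdistrib matrix_neg_left matrix_inv_right
        flip: matrix_mul_assoc)
  finally have QS: "Q ** lin_frac A B C D E0 = - ((A + B ** E2) ** Pinv ** ?W0) - R" .
  have "Q ** (D - lin_frac A B C D E0 ** B) = Q ** D - Q ** lin_frac A B C D E0 ** B"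
    by (simp add: matrix_ring_simps)
  also have "\<dots> = (A + B ** E2) ** Pinv ** ?W0 ** B - B ** P"
    unfolding QD QS by (simp add: matrix_ring_simps algebra_simps)
  finally have QL: "Q ** (D - lin_frac A B C D E0 ** B) = (A + B ** E2) ** (Pinv ** ?W0 ** B) - B ** P"
    by (simp add: matrix_mul_assoc)
  have "?W2 ** Q ** (D - lin_frac A B C D E0 ** B) = ?W2 ** (Q ** (D - lin_frac A B C D E0 ** B))"
    by (simp only: matrix_mul_assoc)
  also have "\<dots> = ?W2 ** (A + B ** E2) ** (Pinv ** ?W0 ** B) - ?W2 ** (B ** P)"
    unfolding QL by (simp only: matrix_diff_ldistrib matrix_mul_assoc)
  finally show ?thesis
    using inv(2) by (simp add: matrix_inv_left matrix_mul_assoc)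
qed

text \<open>The last summand will be the time derivative of $S_0$.  Proof: write $S_1 - S_0$ and $S_0 - S_{-1}$
  with the difference formula, eliminate $Q$ by the Sylvester-type identity and recombine the
  inverses with the resolvent identity.\<close>

lemma lin_frac_three_term:
  fixes P Pinv R A B F :: "'a::ring_1^'n^'n" and C D :: "'a^'n^'m" and Q :: "'a^'m^'n"
  defines "S \<equiv> lin_frac A B C D"
  assumes PPinv: "P ** Pinv = mat 1" and PinvP: "Pinv ** P = mat 1" and FP: "F ** P = P ** F"
    and hC: "Q ** C + R ** A = - (A ** Pinv)" and hD: "Q ** D + R ** B = - (B ** P)"
    and inv0: "invertible (A + B ** (Pinv ** F))" and inv1: "invertible (A + B ** F)"
    and inv2: "invertible (A + B ** (P ** F))"
  shows "(S (P ** F) - S F) ** Q ** (S F - S (Pinv ** F))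
    = (S (P ** F) - S (Pinv ** F)) + (D - S F ** B) ** ((Pinv - P) ** F) ** matrix_inv (A + B ** F)"
proof -
  define W0 W1 W2 where "W0 = matrix_inv (A + B ** (Pinv ** F))"
    and "W1 = matrix_inv (A + B ** F)" and "W2 = matrix_inv (A + B ** (P ** F))"
  define L0 L1 where "L0 = D - S (Pinv ** F) ** B" and "L1 = D - S F ** B"
  define N1 N2 where "N1 = P ** F - F" and "N2 = F - Pinv ** F"
  have FPinv: "F ** Pinv = Pinv ** F"
    by (metis FP PPinv PinvP matrix_mul_assoc matrix_mul_lid matrix_mul_rid)
  have PPinvF: "P ** (Pinv ** F) = F"
    by (simp add: matrix_mul_assoc PPinv)
  have N1Pinv: "N1 ** Pinv = N2"
    unfolding N1_def N2_def by (simp add: matrix_diff_rdistrib FPinv PPinvF flip: matrix_mul_assoc)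
  have PN2: "P ** N2 = N1"
    unfolding N1_def N2_def by (simp add: matrix_diff_ldistrib PPinvF)
  have diff21: "S (P ** F) - S F = L1 ** N1 ** W2"
    unfolding S_def L1_def N1_def W2_def by (rule lin_frac_diff [OF inv1 inv2])
  have diff10: "S F - S (Pinv ** F) = L0 ** N2 ** W1"
    unfolding S_def L0_def N2_def W1_def by (rule lin_frac_diff [OF inv0 inv1])
  have diff10_alt: "S F - S (Pinv ** F) = L1 ** N2 ** W0"
    using lin_frac_diff [OF inv1 inv0, of C D] unfolding S_def L1_def N2_def W0_def
    by (simp add: matrix_diff_ldistrib matrix_diff_rdistrib matrix_neg_left algebra_simps)
  have syl: "W2 ** Q ** L0 = Pinv ** W0 ** B - W2 ** B ** P"
    unfolding W0_def W2_def L0_def S_def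
    by (rule lin_frac_sylvester [OF hC hD _ inv0 inv2])
       (simp add: FPinv PPinv flip: matrix_mul_assoc)
  have res0: "W0 ** B ** N2 ** W1 = W0 - W1"
  proof -
    have "(A + B ** F) - (A + B ** (Pinv ** F)) = B ** N2"
      unfolding N2_def by (simp add: matrix_diff_ldistrib)
    then show ?thesis
      using matrix_inv_diff [OF inv1 inv0] unfolding W0_def W1_def by (simp add: matrix_mul_assoc)
  qed
  have res2: "W2 ** B ** N1 ** W1 = W1 - W2"
  proof -
    have "(A + B ** F) - (A + B ** (P ** F)) = - (B ** N1)"
      unfolding N1_def by (simp add: matrix_diff_ldistrib)
    then have "W2 - W1 = - (W2 ** B ** N1 ** W1)"
      using matrix_inv_diff [OF inv1 inv2] unfolding W1_def W2_def
      by (simp add: matrix_neg_left matrix_neg_right matrix_mul_assoc)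
    then show ?thesis by (metis minus_diff_eq minus_minus)
  qed
  have "(S (P ** F) - S F) ** Q ** (S F - S (Pinv ** F)) = L1 ** N1 ** (W2 ** Q ** L0) ** N2 ** W1"
    unfolding diff21 diff10 by (simp add: matrix_mul_assoc)
  also have "\<dots> = L1 ** (N1 ** Pinv) ** (W0 ** B ** N2 ** W1) - L1 ** N1 ** (W2 ** B ** (P ** N2) ** W1)"
    unfolding syl by (simp add: matrix_ring_simps)
  also have "\<dots> = L1 ** N2 ** (W0 ** B ** N2 ** W1) - L1 ** N1 ** (W2 ** B ** N1 ** W1)"
    unfolding N1Pinv PN2 ..
  also have "\<dots> = L1 ** N1 ** W2 + L1 ** N2 ** W0 - L1 ** (N1 + N2) ** W1"
    unfolding res0 res2 by (simp add: matrix_ring_simps algebra_simps)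
  also have "\<dots> = (S (P ** F) - S (Pinv ** F)) + L1 ** ((Pinv - P) ** F) ** W1"
  proof -
    have N: "(Pinv - P) ** F = - (N1 + N2)"
      unfolding N1_def N2_def by (simp add: matrix_diff_rdistrib)
    have S: "S (P ** F) - S (Pinv ** F) = (S (P ** F) - S F) + (S F - S (Pinv ** F))"
      by simp
    show ?thesis
      unfolding N S diff21 diff10_alt matrix_neg_right matrix_neg_left by simp
  qed
  finally show ?thesis unfolding L1_def W1_def .
qed

section \<open>Derivatives of matrix-valued functions\<close>

text \<open>Matrix multiplication is bilinear, hence bounded since the spaces are finite-dimensional;
  this gives the product rule.\<close>

lemma bounded_bilinear_matrix_mult:
  "bounded_bilinear ((**) :: 'a::{euclidean_space,real_algebra_1}^'n^'m \<Rightarrow> 'a^'p^'n \<Rightarrow> 'a^'p^'m)"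
  unfolding bilinear_conv_bounded_bilinear [symmetric] bilinear_def linear_iff
  by (simp add: matrix_add_ldistrib matrix_add_rdistrib scalar_matrix_assoc matrix_scalar_ac)

lemma has_vector_derivative_matrix_mult:
  fixes F :: "real \<Rightarrow> 'a::{euclidean_space,real_algebra_1}^'n^'m" and G :: "real \<Rightarrow> 'a^'p^'n"
  assumes "(F has_vector_derivative F') (at t within S)" "(G has_vector_derivative G') (at t within S)"
  shows "((\<lambda>s. F s ** G s) has_vector_derivative (F t ** G' + F' ** G t)) (at t within S)"
  using bounded_bilinear.has_vector_derivative [OF bounded_bilinear_matrix_mult assms] .

lemma bounded_linear_axis: "bounded_linear (axis i :: 'a::euclidean_space \<Rightarrow> 'a^'n)"
  unfolding linear_conv_bounded_linear [symmetric] linear_iff by (simp add: axis_def vec_eq_iff)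

lemma has_vector_derivative_vec_iff:
  fixes f :: "real \<Rightarrow> 'a::euclidean_space^'n"
  shows "(f has_vector_derivative f') F \<longleftrightarrow> (\<forall>i. ((\<lambda>s. f s $ i) has_vector_derivative f' $ i) F)"
proof
  assume "(f has_vector_derivative f') F"
  then show "\<forall>i. ((\<lambda>s. f s $ i) has_vector_derivative f' $ i) F"
    using bounded_linear.has_vector_derivative [OF bounded_linear_vec_nth] by blast
next
  have expand: "x = (\<Sum>i\<in>UNIV. axis i (x $ i))" for x :: "'a^'n"
    by (simp add: vec_eq_iff axis_def if_distrib cong: if_cong)
  assume "\<forall>i. ((\<lambda>s. f s $ i) has_vector_derivative f' $ i) F"
  then have "((\<lambda>s. \<Sum>i\<in>UNIV. axis i (f s $ i)) has_vector_derivative (\<Sum>i\<in>UNIV. axis i (f' $ i))) F"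
    by (intro has_vector_derivative_sum bounded_linear.has_vector_derivative [OF bounded_linear_axis]) auto
  then show "(f has_vector_derivative f') F"
    by (simp flip: expand)
qed

lemma has_vector_derivative_matrix_iff:
  fixes f :: "real \<Rightarrow> 'a::euclidean_space^'n^'m"
  shows "(f has_vector_derivative f') F \<longleftrightarrow> (\<forall>i j. ((\<lambda>s. f s $ i $ j) has_vector_derivative f' $ i $ j) F)"
  by (simp add: has_vector_derivative_vec_iff [of f] has_vector_derivative_vec_iff [of "\<lambda>s. f s $ _"])

text \<open>The determinant is a polynomial in the entries, hence differentiable along differentiable curves.\<close>

lemma det_differentiable:
  fixes X :: "real \<Rightarrow> 'a::real_normed_field^'n^'n"
  assumes "\<And>i j. (\<lambda>s. X s $ i $ j) differentiable (at t within S)"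
  shows "(\<lambda>s. det (X s)) differentiable (at t within S)"
proof -
  have "(\<lambda>s. \<Prod>i\<in>I. X s $ i $ p i) differentiable (at t within S)" if "finite I" for I and p :: "'n \<Rightarrow> 'n"
    using that by (induction I rule: finite_induct) (auto intro: differentiable_mult assms)
  then show ?thesis
    unfolding det_def by (intro differentiable_sum differentiable_mult) auto
qed

lemma matrix_inv_cramer:
  fixes X :: "'a::field^'n^'n"
  assumes "invertible X"
  shows "matrix_inv X $ k $ j = det (\<chi> i l. if l = k then (if i = j then 1 else 0) else X $ i $ l) / det X"
proof -
  let ?e = "(\<chi> i. if i = j then 1 else 0) :: 'a^'n"
  have "X *v column j (matrix_inv X) = ?e"
    using matrix_inv_right [OF assms]
    by (simp add: vec_eq_iff column_def matrix_vector_mult_def matrix_matrix_mult_def mat_def)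
  then have "column j (matrix_inv X) = (\<chi> k. det (\<chi> i l. if l = k then ?e $ i else X $ i $ l) / det X)"
    using cramer invertible_det_nz assms by blast
  moreover have "(\<chi> i l. if l = k then ?e $ i else X $ i $ l)
      = (\<chi> i l. if l = k then (if i = j then 1 else 0) else X $ i $ l)"
    by (simp add: vec_eq_iff)
  ultimately show ?thesis
    by (simp add: vec_eq_iff column_def)
qed

text \<open>By Cramer's rule the entries of the inverse are quotients of differentiable determinants.\<close>

lemma matrix_inv_differentiable:
  fixes X :: "real \<Rightarrow> 'a::{real_normed_field,euclidean_space}^'n^'n"
  assumes X: "(X has_vector_derivative X') (at t within S)"
    and inv: "\<And>s. s \<in> S \<Longrightarrow> invertible (X s)" and t: "t \<in> S"
  obtains W' where "((\<lambda>s. matrix_inv (X s)) has_vector_derivative W') (at t within S)"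
proof -
  define g where "g k j s = det (\<chi> i l. if l = k then (if i = j then 1 else 0) else X s $ i $ l) / det (X s)"
    for k j s
  have entry: "(\<lambda>s. X s $ i $ j) differentiable (at t within S)" for i j
    using X by (auto simp: has_vector_derivative_matrix_iff intro: differentiableI_vector)
  have "g k j differentiable (at t within S)" for k j
    unfolding g_def
  proof (intro differentiable_divide det_differentiable)
    show "(\<lambda>s. (\<chi> i l. if l = k then (if i = j then 1 else 0) else X s $ i $ l) $ a $ b)
        differentiable (at t within S)" for a b
      using entry by (cases "b = k") auto
    show "det (X t) \<noteq> 0"
      using inv t invertible_det_nz by blast
  qed (rule entry)
  then have "(g k j has_vector_derivative vector_derivative (g k j) (at t within S)) (at t within S)" for k j
    by (simp add: vector_derivative_works)
  moreover have "matrix_inv (X s) $ k $ j = g k j s" if "s \<in> S" for s k j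
    unfolding g_def using matrix_inv_cramer inv that by blast
  ultimately have "((\<lambda>s. matrix_inv (X s)) has_vector_derivative
      (\<chi> k j. vector_derivative (g k j) (at t within S))) (at t within S)"
    unfolding has_vector_derivative_matrix_iff
    by (auto intro: has_vector_derivative_transform [OF t])
  then show ?thesis ..
qed

text \<open>Once the inverse is known to be
  differentiable, this follows from $X^{-1} = 2X^{-1} - X^{-1} X X^{-1}$ on $S$ and the product rule,
  so no uniqueness of derivatives within $S$ is needed.\<close>

lemma has_vector_derivative_matrix_inv:
  fixes X :: "real \<Rightarrow> 'a::{real_normed_field,euclidean_space}^'n^'n"
  assumes X: "(X has_vector_derivative X') (at t within S)"
    and inv: "\<And>s. s \<in> S \<Longrightarrow> invertible (X s)" and t: "t \<in> S"
  shows "((\<lambda>s. matrix_inv (X s)) has_vector_derivative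
      - (matrix_inv (X t) ** X' ** matrix_inv (X t))) (at t within S)"
proof -
  let ?W = "\<lambda>s. matrix_inv (X s)"
  obtain W' where W': "(?W has_vector_derivative W') (at t within S)"
    using matrix_inv_differentiable [OF assms] .
  have "((\<lambda>s. (?W s + ?W s) - ?W s ** (X s ** ?W s)) has_vector_derivative
      ((W' + W') - (?W t ** (X t ** W' + X' ** ?W t) + W' ** (X t ** ?W t)))) (at t within S)"
    by (intro has_vector_derivative_diff has_vector_derivative_add W'
        has_vector_derivative_matrix_mult X)
  also have "(W' + W') - (?W t ** (X t ** W' + X' ** ?W t) + W' ** (X t ** ?W t))
      = - (?W t ** X' ** ?W t)"
    using inv [OF t] by (simp add: matrix_add_ldistrib matrix_mul_assoc matrix_inv_left matrix_inv_right)
  finally show ?thesis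
    by (rule has_vector_derivative_transform [OF t, rotated])
      (simp add: inv matrix_inv_right)
qed

lemma has_vector_derivative_lin_frac:
  fixes A B :: "'a::{real_normed_field,euclidean_space}^'n^'n" and C D :: "'a^'n^'m"
    and E :: "real \<Rightarrow> 'a^'n^'n"
  assumes E: "(E has_vector_derivative E') (at t within S)"
    and inv: "\<And>s. s \<in> S \<Longrightarrow> invertible (A + B ** E s)" and t: "t \<in> S"
  shows "((\<lambda>s. lin_frac A B C D (E s)) has_vector_derivative
      (D - lin_frac A B C D (E t) ** B) ** E' ** matrix_inv (A + B ** E t)) (at t within S)"
proof -
  let ?W = "matrix_inv (A + B ** E t)"
  have X: "((\<lambda>s. A + B ** E s) has_vector_derivative B ** E') (at t within S)"
    and Y: "((\<lambda>s. C + D ** E s) has_vector_derivative D ** E') (at t within S)"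
    using has_vector_derivative_add [OF has_vector_derivative_const
        bounded_linear.has_vector_derivative [OF bounded_bilinear.bounded_linear_right
          [OF bounded_bilinear_matrix_mult] E]]
    by simp_all
  have "((\<lambda>s. lin_frac A B C D (E s)) has_vector_derivative
      (C + D ** E t) ** - (?W ** (B ** E') ** ?W) + D ** E' ** ?W) (at t within S)"
    unfolding lin_frac_def
    by (rule has_vector_derivative_matrix_mult [OF Y has_vector_derivative_matrix_inv [OF X inv t]])
  also have "(C + D ** E t) ** - (?W ** (B ** E') ** ?W) + D ** E' ** ?W
      = (D - lin_frac A B C D (E t) ** B) ** E' ** ?W"
    by (simp add: lin_frac_def matrix_ring_simps algebra_simps)
  finally show ?thesis .
qed

section \<open>Matrix powers and the matrix exponential\<close>

lemma mat_pow_commute: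
  fixes A B :: "'a::semiring_1^'n^'n"
  assumes "A ** B = B ** A"
  shows "mat_pow A k ** B = B ** mat_pow A k"
proof (induction k)
  case (Suc k)
  have "mat_pow A (Suc k) ** B = A ** (mat_pow A k ** B)"
    by (simp add: matrix_mul_assoc)
  also have "\<dots> = B ** mat_pow A (Suc k)"
    by (simp add: Suc assms matrix_mul_assoc)
  finally show ?case .
qed simp

lemma mat_pow_scaleR:
  "mat_pow (r *\<^sub>R (K::'a::real_algebra_1^'n^'n)) k = (r ^ k) *\<^sub>R mat_pow K k"
  by (induction k) (simp_all add: matrix_scalar_ac scalar_matrix_assoc [symmetric])

text \<open>Geometric growth of the norms of matrix powers; this makes the exponential series converge.\<close>

lemma mat_pow_norm_bound:
  fixes M :: "'a::{euclidean_space,real_algebra_1}^'n^'n"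
  obtains c where "c \<ge> 0" "\<And>k. norm (mat_pow M k) \<le> norm (mat 1 :: 'a^'n^'n) * c ^ k"
proof -
  obtain K where K: "K > 0" "\<And>a b. norm ((a::'a^'n^'n) ** (b::'a^'n^'n)) \<le> norm a * norm b * K"
    using bounded_bilinear.pos_bounded [OF bounded_bilinear_matrix_mult] by blast
  have "norm (mat_pow M k) \<le> norm (mat 1 :: 'a^'n^'n) * (norm M * K) ^ k" for k
  proof (induction k)
    case (Suc k)
    have "norm (mat_pow M (Suc k)) \<le> norm M * norm (mat_pow M k) * K"
      using K(2) by simp
    also have "\<dots> \<le> norm M * (norm (mat 1 :: 'a^'n^'n) * (norm M * K) ^ k) * K"
      using Suc K(1) by (intro mult_right_mono mult_left_mono) auto
    finally show ?case
      by (simp add: algebra_simps)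
  qed simp
  with K(1) show ?thesis
    using that [of "norm M * K"] by simp
qed

lemma summable_norm_mat_pow_exp:
  fixes M :: "'a::{euclidean_space,real_algebra_1}^'n^'n"
  assumes "r \<ge> 0"
  shows "summable (\<lambda>k. norm (mat_pow M k) * r ^ k / fact k)"
proof -
  obtain c where c: "c \<ge> 0" "\<And>k. norm (mat_pow M k) \<le> norm (mat 1 :: 'a^'n^'n) * c ^ k"
    using mat_pow_norm_bound by blast
  show ?thesis
  proof (rule summable_comparison_test' [OF summable_mult [OF summable_exp [of "c * r"]]])
    fix k
    have "norm (mat_pow M k) * r ^ k \<le> norm (mat 1 :: 'a^'n^'n) * c ^ k * r ^ k"
      using c(2) assms by (simp add: mult_right_mono)
    then show "norm (norm (mat_pow M k) * r ^ k / fact k)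
        \<le> norm (mat 1 :: 'a^'n^'n) * (inverse (fact k) * (c * r) ^ k)"
      using assms by (simp add: power_mult_distrib divide_right_mono field_simps)
  qed
qed

lemma summable_mat_exp_series:
  "summable (\<lambda>k. (1 / fact k) *\<^sub>R mat_pow (M::'a::{euclidean_space,real_algebra_1}^'n^'n) k)"
  by (rule summable_norm_cancel) (use summable_norm_mat_pow_exp [of 1 M] in simp)

lemma mat_exp_commute:
  fixes A M :: "complex^'n^'n"
  assumes "A ** M = M ** A"
  shows "A ** mat_exp M = mat_exp M ** A"
proof -
  have "A ** mat_exp M = (\<Sum>k. A ** ((1 / fact k) *\<^sub>R mat_pow M k))"
    unfolding mat_exp_def
    by (rule bounded_linear.suminf [OF bounded_bilinear.bounded_linear_right
          [OF bounded_bilinear_matrix_mult] summable_mat_exp_series])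
  also have "\<dots> = (\<Sum>k. ((1 / fact k) *\<^sub>R mat_pow M k) ** A)"
    using mat_pow_commute [OF assms [symmetric]]
    by (simp add: matrix_scalar_ac scalar_matrix_assoc [symmetric])
  also have "\<dots> = mat_exp M ** A"
    unfolding mat_exp_def
    by (rule bounded_linear.suminf [OF bounded_bilinear.bounded_linear_left
          [OF bounded_bilinear_matrix_mult] summable_mat_exp_series, symmetric])
  finally show ?thesis .
qed

lemma mat_exp_entry_series:
  fixes G :: "complex^'n^'m" and K :: "complex^'n^'n"
  shows "(G ** mat_exp (s *\<^sub>R K)) $ i $ j
    = (\<Sum>k. of_real (1 / fact k) * (G ** mat_pow K k) $ i $ j * of_real s ^ k)"
proof -
  have T: "bounded_linear (\<lambda>M::complex^'n^'n. (G ** M) $ i $ j)"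
    by (intro bounded_linear_compose [OF bounded_linear_vec_nth] bounded_linear_vec_nth
        bounded_bilinear.bounded_linear_right [OF bounded_bilinear_matrix_mult])
  have "(G ** mat_exp (s *\<^sub>R K)) $ i $ j = (\<Sum>k. (G ** ((1 / fact k) *\<^sub>R mat_pow (s *\<^sub>R K) k)) $ i $ j)"
    unfolding mat_exp_def by (rule bounded_linear.suminf [OF T summable_mat_exp_series])
  also have "\<dots> = (\<Sum>k. of_real (1 / fact k) * (G ** mat_pow K k) $ i $ j * of_real s ^ k)"
  proof (rule suminf_cong)
    fix k
    have "G ** ((1 / fact k) *\<^sub>R mat_pow (s *\<^sub>R K) k) = (s ^ k / fact k) *\<^sub>R (G ** mat_pow K k)"
      by (simp add: mat_pow_scaleR matrix_scalar_ac scalar_matrix_assoc [symmetric])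
    then have e: "(G ** ((1 / fact k) *\<^sub>R mat_pow (s *\<^sub>R K) k)) $ i $ j
        = (s ^ k / fact k) *\<^sub>R (G ** mat_pow K k) $ i $ j"
      by simp
    show "(G ** ((1 / fact k) *\<^sub>R mat_pow (s *\<^sub>R K) k)) $ i $ j
        = of_real (1 / fact k) * (G ** mat_pow K k) $ i $ j * of_real s ^ k"
      unfolding e by (simp add: scaleR_conv_of_real field_simps)
  qed
  finally show ?thesis .
qed

text \<open>$\frac{d}{ds} e^{sK} = K e^{sK}$, proved entrywise by termwise differentiation of power series.\<close>

lemma has_vector_derivative_mat_exp:
  fixes K :: "complex^'n^'n"
  shows "((\<lambda>s. mat_exp (s *\<^sub>R K)) has_vector_derivative K ** mat_exp (t *\<^sub>R K)) (at t within S)"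
  unfolding has_vector_derivative_matrix_iff
proof (intro allI)
  fix i j
  define c where "c k = of_real (1 / fact k) * mat_pow K k $ i $ j" for k
  have entry: "mat_exp (s *\<^sub>R K) $ i $ j = (\<Sum>k. c k * of_real s ^ k)" for s
    using mat_exp_entry_series [of "mat 1" s K i j] by (simp add: c_def)
  have "summable (\<lambda>k. c k * y ^ k)" for y
  proof (rule summable_comparison_test' [OF summable_norm_mat_pow_exp [of "norm y" K]])
    fix k
    have "norm (c k * y ^ k) = norm (mat_pow K k $ i $ j) * norm y ^ k / fact k"
      by (simp add: c_def norm_mult norm_power norm_divide)
    also have "\<dots> \<le> norm (mat_pow K k) * norm y ^ k / fact k"
      by (intro divide_right_mono mult_right_mono order_trans [OF
            Finite_Cartesian_Product.norm_nth_le Finite_Cartesian_Product.norm_nth_le]) auto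
    finally show "norm (c k * y ^ k) \<le> norm (mat_pow K k) * norm y ^ k / fact k" .
  qed simp
  then have deriv: "((\<lambda>z. \<Sum>k. c k * z ^ k) has_field_derivative (\<Sum>k. diffs c k * of_real t ^ k)) (at (of_real t))"
    by (rule termdiffs_strong_converges_everywhere)
  have deriv_entry: "(K ** mat_exp (t *\<^sub>R K)) $ i $ j = (\<Sum>k. diffs c k * of_real t ^ k)"
  proof -
    have "of_real (1 / fact k) * (K ** mat_pow K k) $ i $ j = diffs c k" for k
    proof -
      have "(1 / fact k :: real) = of_nat (Suc k) * (1 / fact (Suc k))"
        by (simp add: fact_Suc)
      then have "(of_real (1 / fact k) :: complex) = of_nat (Suc k) * of_real (1 / fact (Suc k))"
        by (metis of_real_mult of_real_of_nat_eq)
      moreover have "K ** mat_pow K k = mat_pow K (Suc k)"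
        by simp
      moreover have "(of_nat (Suc k) :: complex) \<noteq> 0"
        by (simp only: of_nat_eq_0_iff)
      ultimately show ?thesis
        by (simp add: diffs_def c_def)
    qed
    then show ?thesis
      using mat_exp_entry_series [of K t K i j] by simp
  qed
  show "((\<lambda>s. mat_exp (s *\<^sub>R K) $ i $ j) has_vector_derivative
      (K ** mat_exp (t *\<^sub>R K)) $ i $ j) (at t within S)"
    unfolding entry deriv_entry by (rule has_vector_derivative_real_field [OF deriv])
qed

section \<open>The evolution factor $\tilde P^n e^{t(\tilde P^{-1} - \tilde P)}$\<close>

lemma mat_ipow_commute:
  fixes P B :: "'a::semiring_1^'n^'n"
  assumes "P ** B = B ** P" "matrix_inv P ** B = B ** matrix_inv P"
  shows "mat_ipow P n ** B = B ** mat_ipow P n"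
  unfolding mat_ipow_def using mat_pow_commute assms by auto

text \<open>Integer powers satisfy $P^{n+1} = P\,P^n$ and $P^{n-1} = P^{-1} P^n$, also across $n = 0$.\<close>

lemma mat_ipow_succ:
  fixes P :: "'a::semiring_1^'n^'n"
  assumes "invertible P"
  shows "mat_ipow P (n + 1) = P ** mat_ipow P n"
proof (cases "0 \<le> n")
  case True
  then have "nat (n + 1) = Suc (nat n)" by simp
  with True show ?thesis by (simp add: mat_ipow_def)
next
  case False
  then have "nat (- n) = Suc (nat (- (n + 1)))" by simp
  with False have "mat_ipow P n = matrix_inv P ** mat_ipow P (n + 1)"
    by (cases "n = -1") (auto simp: mat_ipow_def)
  then show ?thesis
    by (simp add: matrix_mul_assoc matrix_inv_right [OF assms])
qed

lemma mat_ipow_pred: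
  fixes P :: "'a::semiring_1^'n^'n"
  assumes "invertible P"
  shows "mat_ipow P (n - 1) = matrix_inv P ** mat_ipow P n"
  using mat_ipow_succ [OF assms, of "n - 1"]
  by (simp add: matrix_mul_assoc matrix_inv_left [OF assms])

lemma
  fixes P :: "complex^'n^'n"
  assumes P: "invertible P"
  shows lv_E_succ: "lv_E P (n + 1) t = P ** lv_E P n t"
    and lv_E_pred: "lv_E P (n - 1) t = matrix_inv P ** lv_E P n t"
  unfolding lv_E_def mat_ipow_succ [OF P] mat_ipow_pred [OF P] by (simp_all add: matrix_mul_assoc)

lemma lv_E_commute:
  fixes P :: "complex^'n^'n"
  assumes P: "invertible P"
  shows "lv_E P n t ** P = P ** lv_E P n t"
proof -
  let ?K = "t *\<^sub>R (matrix_inv P - P)"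
  have "P ** ?K = ?K ** P"
    using P by (simp add: matrix_scalar_ac scalar_matrix_assoc [symmetric] matrix_diff_ldistrib
        matrix_diff_rdistrib matrix_inv_left matrix_inv_right scaleR_diff_right)
  then have "mat_exp ?K ** P = P ** mat_exp ?K"
    by (simp add: mat_exp_commute)
  moreover have "mat_ipow P n ** P = P ** mat_ipow P n"
    using P by (intro mat_ipow_commute) (simp_all add: matrix_inv_left matrix_inv_right)
  ultimately show ?thesis
    unfolding lv_E_def by (metis matrix_mul_assoc)
qed

lemma has_vector_derivative_lv_E:
  fixes P :: "complex^'n^'n"
  assumes P: "invertible P"
  shows "((\<lambda>s. lv_E P n s) has_vector_derivative (matrix_inv P - P) ** lv_E P n t) (at t within S)"
proof -
  let ?K = "matrix_inv P - P"
  have "mat_ipow P n ** ?K = ?K ** mat_ipow P n"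
    using P by (intro mat_ipow_commute)
      (simp_all add: matrix_diff_ldistrib matrix_diff_rdistrib matrix_mul_assoc
        matrix_inv_left matrix_inv_right)
  moreover have "((\<lambda>s. mat_ipow P n ** mat_exp (s *\<^sub>R ?K)) has_vector_derivative
      mat_ipow P n ** (?K ** mat_exp (t *\<^sub>R ?K))) (at t within S)"
    by (rule bounded_linear.has_vector_derivative [OF bounded_bilinear.bounded_linear_right
          [OF bounded_bilinear_matrix_mult] has_vector_derivative_mat_exp])
  ultimately show ?thesis
    unfolding lv_E_def by (simp add: matrix_mul_assoc)
qed

definition sandwich :: "'a::semiring_1^'m \<Rightarrow> 'a^'n^'m \<Rightarrow> 'a^'n \<Rightarrow> 'a" where
  "sandwich u M v = (\<Sum>i\<in>UNIV. (u v* M) $ i * v $ i)"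

lemma bounded_linear_sandwich:
  "bounded_linear (\<lambda>M::'a::real_normed_field^'n^'m. sandwich u M v)"
proof -
  have "bounded_linear (\<lambda>M::'a^'n^'m. \<Sum>i\<in>UNIV. (\<Sum>j\<in>UNIV. u $ j * M $ j $ i) * v $ i)"
    by (intro bounded_linear_sum bounded_linear_mult_const bounded_linear_const_mult
        bounded_linear_compose [OF bounded_linear_vec_nth bounded_linear_vec_nth])
  then show ?thesis
    unfolding sandwich_def vector_matrix_mult_def by simp
qed

lemma sandwich_diff: "sandwich u (M - N) v = sandwich u M v - sandwich u N v"
  for M N :: "'a::real_normed_field^'n^'m"
  using linear_diff [OF bounded_linear.linear [OF bounded_linear_sandwich]] .

lemma sandwich_rank_one:
  fixes Z1 Z2 :: "'a::field^'n^'m"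
  shows "sandwich u (Z1 ** (\<chi> i j. v $ i * u $ j) ** Z2) v = sandwich u Z1 v * sandwich u Z2 v"
proof -
  have q: "w v* (\<chi> i j. v $ i * u $ j) = (\<Sum>b\<in>UNIV. w $ b * v $ b) *s u" for w :: "'a^'n"
    by (simp add: vec_eq_iff vector_matrix_mult_def sum_distrib_left mult_ac)
  have "u v* (Z1 ** (\<chi> i j. v $ i * u $ j) ** Z2) = ((u v* Z1) v* (\<chi> i j. v $ i * u $ j)) v* Z2"
    by (simp add: vector_matrix_mul_assoc)
  also have "\<dots> = sandwich u Z1 v *s (u v* Z2)"
    unfolding q sandwich_def by (simp add: scalar_vector_matrix_assoc)
  finally show ?thesis
    unfolding sandwich_def by (simp add: sum_distrib_left mult_ac)
qed

section \<open>The Lotka--Volterra lattice\<close>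

lemma lv_phi_sandwich: "lv_phi A B C D P U V n t = sandwich U (lin_frac A B C D (lv_E P n t)) V"
  unfolding lv_phi_def sandwich_def lin_frac_def lv_X_def lv_Y_def ..

text \<open>The derivative of $S(E_n)$ matches the extra summand of the
  three-term identity, and $U^T(\cdot)V$ is linear and factorizes through $Q = VU^T$.\<close>

lemma lv_phi_derivative:
  fixes P R A B :: "complex^'n^'n" and C D :: "complex^'n^'m"
    and U :: "complex^'m" and V :: "complex^'n" and t :: real
  defines "\<phi> k \<equiv> lv_phi A B C D P U V k t"
  assumes P: "invertible P"
    and hC: "(\<chi> i j. V $ i * U $ j :: complex^'m^'n) ** C + R ** A = - (A ** matrix_inv P)"
    and hD: "(\<chi> i j. V $ i * U $ j :: complex^'m^'n) ** D + R ** B = - (B ** P)"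
    and inv: "\<And>k s. s \<in> I \<Longrightarrow> invertible (lv_X A B P k s)" and t: "t \<in> I"
  shows "((\<lambda>s. lv_phi A B C D P U V n s) has_vector_derivative
    (\<phi> (n + 1) - \<phi> n) * (\<phi> n - \<phi> (n - 1)) - (\<phi> (n + 1) - \<phi> (n - 1))) (at t within I)"
proof -
  let ?Q = "\<chi> i j. V $ i * U $ j :: complex^'m^'n" and ?S = "lin_frac A B C D"
  define F where "F = lv_E P n t"
  have E: "lv_E P (n + 1) t = P ** F" "lv_E P (n - 1) t = matrix_inv P ** F"
    unfolding F_def using lv_E_succ lv_E_pred P by blast+
  have \<phi>: "\<phi> (n + 1) = sandwich U (?S (P ** F)) V" "\<phi> n = sandwich U (?S F) V"
    "\<phi> (n - 1) = sandwich U (?S (matrix_inv P ** F)) V"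
    unfolding \<phi>_def lv_phi_sandwich E F_def by simp_all
  have invX: "invertible (A + B ** lv_E P k s)" if "s \<in> I" for k s
    using inv [OF that] unfolding lv_X_def .
  have "((\<lambda>s. ?S (lv_E P n s)) has_vector_derivative
      (D - ?S F ** B) ** ((matrix_inv P - P) ** F) ** matrix_inv (A + B ** F)) (at t within I)"
    unfolding F_def
    by (rule has_vector_derivative_lin_frac [OF has_vector_derivative_lv_E [OF P] invX t])
  also have "(D - ?S F ** B) ** ((matrix_inv P - P) ** F) ** matrix_inv (A + B ** F)
      = (?S (P ** F) - ?S F) ** ?Q ** (?S F - ?S (matrix_inv P ** F))
        - (?S (P ** F) - ?S (matrix_inv P ** F))"
    using lin_frac_three_term [OF matrix_inv_right [OF P] matrix_inv_left [OF P]
        lv_E_commute [OF P] hC hD]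
      invX [OF t, of "n - 1"] invX [OF t, of n] invX [OF t, of "n + 1"]
    unfolding E F_def by simp
  finally show ?thesis
    unfolding lv_phi_sandwich \<phi> sandwich_diff [symmetric] sandwich_rank_one [symmetric]
    by (rule bounded_linear.has_vector_derivative [OF bounded_linear_sandwich])
qed

text \<open>The argument is pointwise in $t$.\<close>

theorem mainTheorem8:
  fixes P R A B :: "complex^'n^'n"
    and C D :: "complex^'n^'m"
    and U :: "complex^'m" and V :: "complex^'n"
    and I :: "real set"
  assumes "invertible P"
    and "is_interval I"
    and "(\<chi> i j. V $ i * U $ j :: complex^'m^'n) ** C + R ** A = - (A ** matrix_inv P)"
    and "(\<chi> i j. V $ i * U $ j :: complex^'m^'n) ** D + R ** B = - (B ** P)"
    and "\<forall>n. \<forall>t\<in>I. invertible (lv_X A B P n t)"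
  shows "\<forall>n. \<forall>t\<in>I.
    ((\<lambda>s. lv_a A B C D P U V n s) has_vector_derivative
       (lv_a A B C D P U V (n + 1) t * lv_a A B C D P U V n t
        - lv_a A B C D P U V n t * lv_a A B C D P U V (n - 1) t)) (at t within I)"
proof (intro allI ballI)
  fix n :: int and t assume t: "t \<in> I"
  let ?\<phi> = "\<lambda>k. lv_phi A B C D P U V k t"
  let ?rhs = "\<lambda>k. (?\<phi> (k + 1) - ?\<phi> k) * (?\<phi> k - ?\<phi> (k - 1)) - (?\<phi> (k + 1) - ?\<phi> (k - 1))"
  note d\<phi> = lv_phi_derivative [OF assms(1,3,4), of I, OF _ t]
  have "((\<lambda>s. lv_phi A B C D P U V (n + 1) s - lv_phi A B C D P U V n s - 1) has_vector_derivative
      ?rhs (n + 1) - ?rhs n - 0) (at t within I)"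
    using assms(5) by (intro has_vector_derivative_diff d\<phi> has_vector_derivative_const) auto
  then show "((\<lambda>s. lv_a A B C D P U V n s) has_vector_derivative
       (lv_a A B C D P U V (n + 1) t * lv_a A B C D P U V n t
        - lv_a A B C D P U V n t * lv_a A B C D P U V (n - 1) t)) (at t within I)"
    unfolding lv_a_def by (simp add: algebra_simps)
qed

end
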